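(* Let $n\ge2$, $1\le t\le n-1$, and let $a,b,c,d,e>0$. Consider the continuous-time Markov chain on the set of words $u=u_1\cdots u_n\in\{1,0,\bar1\}^n$ having exactly $t$ nonzero letters, with the following transitions: for $1\le i<n$, a factor $u_iu_{i+1}$ equal to $01$ becomes $10$ at rate $a$, a factor $\bar11$ becomes $1\bar1$ at rate $b$, a factor $\bar10$ becomes $0\bar1$ at rate $c$; if $u_n=\bar1$ it becomes $1$ at rate $d$; if $u_1=1$ it becomes $\bar1$ at rate $e$. Then the stationary distribution of this chain at a word $u$ is proportional to $[u]$ evaluated at these values of $a,b,c,d,e$. In particular (for $(a,b,c,d,e)$ proportional to $(2,2,2,1,1)$) this describes the stationary distribution $\pi_J$ of the type C chain $\Theta_J$ with $J=[n]\setminus\{t\}$, under the encoding of a state by the word with $u_j=1$ if column $j$ has a particle in the upper row, $u_j=\bar1$ if in the lower row, $u_j=0$ if column $j$ is empty.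
   Context: Words are finite sequences over $\{1,0,\bar1\}$ ($\bar1=-1$). For every word $u$, $[u]$ is the Laurent polynomial in indeterminates $a,b,c,d,e$ determined uniquely by the recursions, valid for all (possibly empty) words $v,w$: $[v01w]=[v0w]/a$, $[v\bar11w]=([v\bar1w]+[v1w])/b$, $[v\bar10w]=[v0w]/c$, $[v\bar1]=[v]/d$, $[1v]=[v]/e$, and $[u]=1$ whenever $u$ consists only of $0$'s (including the empty word). Type C chain $\Theta_J$ for $J=[n]\setminus\{t\}$: states are placements of $t$ indistinguishable particles in a $2\times n$ array (upper row, lower row), at most one per column. The dynamics, in word encoding, is exactly the chain above with rates $(a,b,c,d,e)=(2,2,2,1,1)$: an upper particle moves left into an empty column or across a lower particle in the adjacent column, a lower particle moves right, and at the ends an upper particle in column $1$ drops to the lower row and a lower particle in column $n$ rises to the upper row. *)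

theory Defs
  imports Complex_Main
begin

text \<open>Words over {1,0,-1} are int lists; letter -1 is written as bar 1.\<close>

definition del_at :: "nat \<Rightarrow> int list \<Rightarrow> int list" where
  "del_at i u = take i u @ drop (Suc i) u"

definition red_pos :: "int list \<Rightarrow> nat \<Rightarrow> bool" where
  "red_pos u i \<longleftrightarrow> Suc i < length u \<and>
     (u ! i, u ! Suc i) \<in> {(0, 1), (-1, 1), (-1, 0)}"

definition first_red :: "int list \<Rightarrow> nat" where
  "first_red u = (LEAST i. red_pos u i)"

lemma first_red_len: "\<exists>i. red_pos u i \<Longrightarrow> Suc (first_red u) < length u"
  unfolding first_red_def by (metis (mono_tags, lifting) LeastI red_pos_def)

text \<open>The bracket [u] evaluated at a,b,c,d,e, computed by applying the defining
  recursions (leftmost applicable factor rule); the paper asserts the recursions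
  determine [u] uniquely.\<close>

function bracket :: "real \<Rightarrow> real \<Rightarrow> real \<Rightarrow> real \<Rightarrow> real \<Rightarrow> int list \<Rightarrow> real" where
  "bracket a b c d e u =
    (if (\<forall>x\<in>set u. x = 0) then 1
     else if hd u = 1 then bracket a b c d e (tl u) / e
     else if last u = -1 then bracket a b c d e (butlast u) / d
     else if (\<exists>i. red_pos u i) then
       (if u ! first_red u = 0 then bracket a b c d e (del_at (Suc (first_red u)) u) / a
        else if u ! Suc (first_red u) = 1 then
          (bracket a b c d e (del_at (Suc (first_red u)) u)
           + bracket a b c d e (del_at (first_red u) u)) / b
        else bracket a b c d e (del_at (first_red u) u) / c)
     else 0)"
  by pat_completeness auto
termination
  apply (relation "measure (\<lambda>(a,b,c,d,e,u). length u)")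
  apply (auto simp: del_at_def dest!: first_red_len)
  apply (metis empty_iff length_pos_if_in_set diff_less zero_less_one One_nat_def)+
  done

definition rate :: "real \<Rightarrow> real \<Rightarrow> real \<Rightarrow> real \<Rightarrow> real \<Rightarrow> int list \<Rightarrow> int list \<Rightarrow> real" where
  "rate a b c d e u v =
    (\<Sum>i<length u - 1.
        (if u ! i = 0 \<and> u ! Suc i = 1 \<and> v = u[i := 1, Suc i := 0] then a else 0)
      + (if u ! i = -1 \<and> u ! Suc i = 1 \<and> v = u[i := 1, Suc i := -1] then b else 0)
      + (if u ! i = -1 \<and> u ! Suc i = 0 \<and> v = u[i := 0, Suc i := -1] then c else 0))
    + (if u \<noteq> [] \<and> last u = -1 \<and> v = butlast u @ [1] then d else 0)
    + (if u \<noteq> [] \<and> hd u = 1 \<and> v = -1 # tl u then e else 0)"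

definition states :: "nat \<Rightarrow> nat \<Rightarrow> int list set" where
  "states n t = {u. length u = n \<and> set u \<subseteq> {-1, 0, 1} \<and> length (filter (\<lambda>x. x \<noteq> 0) u) = t}"

definition stationary :: "int list set \<Rightarrow> (int list \<Rightarrow> int list \<Rightarrow> real) \<Rightarrow> (int list \<Rightarrow> real) \<Rightarrow> bool" where
  "stationary S r p \<longleftrightarrow>
     (\<forall>u\<in>S. p u \<ge> 0) \<and> (\<Sum>u\<in>S. p u) = 1 \<and>
     (\<forall>u\<in>S. (\<Sum>v\<in>S - {u}. p v * r v u) = p u * (\<Sum>v\<in>S - {u}. r u v))"

end

(*
  The bracket is evaluated from left to right by a small automaton whose state records whether a 0
  has been read and how many letters -1 are pending. This evaluation depends linearly on the
  suffix still to be read, so the defining recursions of the bracket hold at every position of the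
  word; in particular it agrees with the bracket, which applies the leftmost rule.

  For stationarity, the flow balance at a word u is split move by move. The net flow through the
  bond at positions i, i + 1 is g i - g (i + 1), where g j is the letter u_j times the value of u
  with its j-th letter deleted, and the two boundary moves contribute -g 0 and g (n - 1), so the
  balance equations telescope to 0.

  For uniqueness, every word reaches the ground state 1^t 0^(n-t) by moves of positive rate that
  decrease a potential. On a finite chain with this property any solution of the balance equations
  is a multiple of a positive one: the states where the ratio of the two attains its maximum are
  closed under moves in both directions.
*)

theory Submission
  imports Defs "HOL-Library.Multiset"
begin

section \<open>Stationary distributions of finite chains\<close>

lemma sum_offdiag_swap:
  fixes f :: "'a \<Rightarrow> 'a \<Rightarrow> 'b::comm_monoid_add"
  assumes "finite M"
  shows "(\<Sum>x\<in>M. \<Sum>w\<in>M - {x}. f w x) = (\<Sum>x\<in>M. \<Sum>w\<in>M - {x}. f x w)"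
proof -
  have "\<And>x. M - {x} = {w. w \<in> M \<and> w \<noteq> x}" "\<And>x. M - {x} = {w. w \<in> M \<and> x \<noteq> w}" by auto
  then show ?thesis using sum.swap_restrict[OF assms assms, of "\<lambda>x w. f w x" "\<lambda>x w. x \<noteq> w"]
    by simp
qed

definition balanced :: "'a set \<Rightarrow> ('a \<Rightarrow> 'a \<Rightarrow> real) \<Rightarrow> ('a \<Rightarrow> real) \<Rightarrow> bool" where
  "balanced S r p \<longleftrightarrow> (\<forall>u\<in>S. (\<Sum>v\<in>S - {u}. p v * r v u) = p u * (\<Sum>v\<in>S - {u}. r u v))"

lemma stationary_iff_balanced:
  "stationary S r p \<longleftrightarrow> (\<forall>u\<in>S. p u \<ge> 0) \<and> (\<Sum>u\<in>S. p u) = 1 \<and> balanced S r p"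
  by (simp add: stationary_def balanced_def)

text \<open>Summed over M, the flows inside M cancel on the two sides of the balance equations.\<close>

lemma balanced_no_outflow:
  assumes fin: "finite S" and M: "M \<subseteq> S" and bal: "balanced S r p"
    and nonneg: "\<And>x w. x \<in> S \<Longrightarrow> w \<in> S \<Longrightarrow> 0 \<le> p x * r x w"
    and no_inflow: "\<And>x w. x \<in> M \<Longrightarrow> w \<in> S - M \<Longrightarrow> p w * r w x = 0"
    and x: "x \<in> M" and w: "w \<in> S - M"
  shows "p x * r x w = 0"
proof -
  have finM: "finite M" using fin M finite_subset by blast
  have inflow: "(\<Sum>w\<in>S - {x}. p w * r w x) = (\<Sum>w\<in>M - {x}. p w * r w x)" if "x \<in> M" for x
    using fin M no_inflow[OF that] by (intro sum.mono_neutral_right) auto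
  have outflow: "(\<Sum>w\<in>S - {x}. p x * r x w) = (\<Sum>w\<in>M - {x}. p x * r x w) + (\<Sum>w\<in>S - M. p x * r x w)"
    if "x \<in> M" for x
  proof -
    have "S - {x} = (M - {x}) \<union> (S - M)" using that M by auto
    then show ?thesis using fin finM by (auto intro: sum.union_disjoint)
  qed
  have "(\<Sum>x\<in>M. \<Sum>w\<in>M - {x}. p w * r w x) = (\<Sum>x\<in>M. \<Sum>w\<in>S - {x}. p x * r x w)"
  proof (rule sum.cong[OF refl])
    fix x assume "x \<in> M"
    then show "(\<Sum>w\<in>M - {x}. p w * r w x) = (\<Sum>w\<in>S - {x}. p x * r x w)"
      using bal M by (auto simp: balanced_def inflow[symmetric] sum_distrib_left)
  qed
  also have "\<dots> = (\<Sum>x\<in>M. \<Sum>w\<in>M - {x}. p x * r x w) + (\<Sum>x\<in>M. \<Sum>w\<in>S - M. p x * r x w)"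
    by (simp add: outflow sum.distrib)
  finally have "(\<Sum>x\<in>M. \<Sum>w\<in>S - M. p x * r x w) = 0"
    using sum_offdiag_swap[OF finM, of "\<lambda>w x. p w * r w x"] by simp
  then have "(\<Sum>w\<in>S - M. p x * r x w) = 0"
    using finM fin x M nonneg by (subst (asm) sum_nonneg_eq_0_iff) (auto intro!: sum_nonneg)
  then show ?thesis using fin w x M nonneg by (subst (asm) sum_nonneg_eq_0_iff) auto
qed

lemma max_ratio_closed:
  assumes fin: "finite S" and rnn: "\<And>u v. u \<in> S \<Longrightarrow> v \<in> S \<Longrightarrow> 0 \<le> r u v"
    and qpos: "\<And>u. u \<in> S \<Longrightarrow> 0 < q u" and qbal: "balanced S r q"
    and pnn: "\<And>u. u \<in> S \<Longrightarrow> 0 \<le> p u" and pbal: "balanced S r p"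
    and R: "0 < R" and le: "\<And>u. u \<in> S \<Longrightarrow> p u \<le> R * q u"
    and u: "u \<in> S" and v: "v \<in> S" and ruv: "0 < r u v"
  shows "p u = R * q u \<longleftrightarrow> p v = R * q v"
proof -
  define M where "M = {w \<in> S. p w = R * q w}"
  have backward: "w \<in> M" if x: "x \<in> M" and w: "w \<in> S" and rwx: "0 < r w x" for x w
  proof (cases "w = x")
    case False
    have xS: "x \<in> S" and px: "p x = R * q x" using x by (auto simp: M_def)
    have "(\<Sum>w\<in>S - {x}. (R * q w - p w) * r w x)
        = R * (\<Sum>w\<in>S - {x}. q w * r w x) - (\<Sum>w\<in>S - {x}. p w * r w x)"
      by (simp add: algebra_simps sum_subtractf sum_distrib_left)
    also have "\<dots> = 0"
      using qbal pbal xS px by (simp add: balanced_def)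
    finally have "\<forall>w\<in>S - {x}. (R * q w - p w) * r w x = 0"
      using fin le rnn xS by (subst (asm) sum_nonneg_eq_0_iff) auto
    then have "(R * q w - p w) * r w x = 0" using w False by blast
    then have "p w = R * q w" using rwx by simp
    then show ?thesis using w by (simp add: M_def)
  qed (use x in simp)
  have forward: "w \<in> M" if x: "x \<in> M" and w: "w \<in> S" and rxw: "0 < r x w" for x w
  proof (rule ccontr)
    assume "w \<notin> M"
    have no_inflow: "p w' * r w' x' = 0" if "x' \<in> M" "w' \<in> S - M" for x' w'
      using backward[OF that(1)] rnn[of w' x'] that by (force simp: M_def)
    have "p x * r x w = 0"
      using balanced_no_outflow[OF fin _ pbal _ no_inflow x] \<open>w \<notin> M\<close> w pnn rnn
      by (auto simp: M_def)
    moreover have "0 < p x" using x R qpos by (auto simp: M_def)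
    ultimately show False using rxw by simp
  qed
  show ?thesis using backward[of v u] forward[of u v] u v ruv by (auto simp: M_def)
qed

lemma balanced_unique:
  assumes fin: "finite S" and rnn: "\<And>u v. u \<in> S \<Longrightarrow> v \<in> S \<Longrightarrow> 0 \<le> r u v"
    and qpos: "\<And>u. u \<in> S \<Longrightarrow> 0 < q u" and qbal: "balanced S r q"
    and c0: "c0 \<in> S" and reach: "\<And>u. u \<in> S \<Longrightarrow> (u, c0) \<in> {(u, v). u \<in> S \<and> v \<in> S \<and> 0 < r u v}\<^sup>*"
    and pnn: "\<And>u. u \<in> S \<Longrightarrow> 0 \<le> p u" and psum: "(\<Sum>u\<in>S. p u) = 1" and pbal: "balanced S r p"
    and u: "u \<in> S"
  shows "p u = q u / (\<Sum>w\<in>S. q w)"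
proof -
  define R where "R = Max ((\<lambda>u. p u / q u) ` S)"
  have le: "p u \<le> R * q u" if "u \<in> S" for u
  proof -
    have "p u / q u \<le> R" using fin that by (simp add: R_def)
    then show ?thesis using qpos[OF that] by (simp add: pos_divide_le_eq mult.commute)
  qed
  have "R \<in> (\<lambda>u. p u / q u) ` S" unfolding R_def using fin c0 by (intro Max_in) auto
  then obtain umax where umax: "umax \<in> S" "R = p umax / q umax" by blast
  have R: "0 < R"
  proof (rule ccontr)
    assume "\<not> 0 < R"
    then have "\<forall>u\<in>S. p u = 0" using le pnn qpos by (meson antisym mult_nonpos_nonneg less_imp_le not_less order.trans)
    then show False using psum by simp
  qed
  note closed = max_ratio_closed[OF fin rnn qpos qbal pnn pbal R le]
  have to_c0: "p u = R * q u \<longleftrightarrow> p c0 = R * q c0" if "u \<in> S" for u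
    using reach[OF that] by (induction rule: converse_rtrancl_induct) (use closed in auto)
  have pR: "p u = R * q u" if "u \<in> S" for u
    using to_c0[OF that] to_c0[OF umax(1)] umax qpos[OF umax(1)] by simp
  have "R * (\<Sum>w\<in>S. q w) = 1" using psum pR by (simp add: sum_distrib_left)
  then have "R = 1 / (\<Sum>w\<in>S. q w)" by (auto simp: eq_divide_eq mult.commute)
  then show ?thesis using pR[OF u] by simp
qed

lemma stationary_iff_normalized:
  assumes fin: "finite S" and rnn: "\<And>u v. u \<in> S \<Longrightarrow> v \<in> S \<Longrightarrow> 0 \<le> r u v"
    and qpos: "\<And>u. u \<in> S \<Longrightarrow> 0 < q u" and qbal: "balanced S r q"
    and c0: "c0 \<in> S" and reach: "\<And>u. u \<in> S \<Longrightarrow> (u, c0) \<in> {(u, v). u \<in> S \<and> v \<in> S \<and> 0 < r u v}\<^sup>*"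
  shows "stationary S r p \<longleftrightarrow> (\<forall>u\<in>S. p u = q u / (\<Sum>w\<in>S. q w))"
proof
  assume "stationary S r p"
  then show "\<forall>u\<in>S. p u = q u / (\<Sum>w\<in>S. q w)"
    using balanced_unique[OF fin rnn qpos qbal c0 reach] by (auto simp: stationary_iff_balanced)
next
  assume p: "\<forall>u\<in>S. p u = q u / (\<Sum>w\<in>S. q w)"
  have Z: "0 < (\<Sum>w\<in>S. q w)" using sum_pos[OF fin] c0 qpos by blast
  have "(\<Sum>u\<in>S. p u) = (\<Sum>u\<in>S. q u) / (\<Sum>w\<in>S. q w)"
    using p by (simp add: sum_divide_distrib[symmetric])
  moreover have "balanced S r p"
    unfolding balanced_def
  proof
    fix u assume "u \<in> S"
    have "(\<Sum>v\<in>S - {u}. p v * r v u) = (\<Sum>v\<in>S - {u}. q v * r v u) / (\<Sum>w\<in>S. q w)"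
      using p by (simp add: sum_divide_distrib)
    also have "\<dots> = p u * (\<Sum>v\<in>S - {u}. r u v)"
      using qbal p \<open>u \<in> S\<close> by (simp add: balanced_def)
    finally show "(\<Sum>v\<in>S - {u}. p v * r v u) = p u * (\<Sum>v\<in>S - {u}. r u v)" .
  qed
  ultimately show "stationary S r p"
    using p Z qpos by (simp add: stationary_iff_balanced less_imp_le)
qed

section \<open>Evaluating the bracket from left to right\<close>

lemma obtain_adjacent:
  assumes "Suc i < length u"
  obtains L R where "u = L @ u ! i # u ! Suc i # R" "length L = i"
proof
  show "u = take i u @ u ! i # u ! Suc i # drop (Suc (Suc i)) u"
    using assms by (metis Cons_nth_drop_Suc Suc_lessD append_take_drop_id)
qed (use assms in simp)

lemma del_at_append: "del_at (length L) (L @ x # R) = L @ R"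
  by (simp add: del_at_def)

lemma del_at_append_Suc: "del_at (Suc (length L)) (L @ x # y # R) = L @ x # R"
  using del_at_append[of "L @ [x]" y R] by simp

lemma set_del_at_subset: "set (del_at i u) \<subseteq> set u"
  unfolding del_at_def using set_take_subset set_drop_subset by fastforce

lemma length_del_at: "i < length u \<Longrightarrow> length (del_at i u) < length u"
  by (simp add: del_at_def)

context fixes a b c d e :: real
begin

text \<open>bracket_aux w z k is the bracket of the word 0 (-1)^k w if z holds and of (-1)^k w
  otherwise; bracket_one (bracket_aux w) z k is the same with a letter 1 inserted in front of w.\<close>

primrec bracket_one :: "(bool \<Rightarrow> nat \<Rightarrow> real) \<Rightarrow> bool \<Rightarrow> nat \<Rightarrow> real" where
  "bracket_one g z 0 = (if z then 1 / a else 1 / e) * g z 0"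
| "bracket_one g z (Suc k) = (g z (Suc k) + bracket_one g z k) / b"

primrec bracket_aux :: "int list \<Rightarrow> bool \<Rightarrow> nat \<Rightarrow> real" where
  "bracket_aux [] = (\<lambda>z k. 1 / d ^ k)"
| "bracket_aux (x # w) = (\<lambda>z k.
     if x = 0 then bracket_aux w True 0 / c ^ k
     else if x = -1 then bracket_aux w z (Suc k)
     else bracket_one (bracket_aux w) z k)"

definition bracket_lr :: "int list \<Rightarrow> real" where
  "bracket_lr u = bracket_aux u False 0"

lemma bracket_one_linear:
  assumes "\<And>z k. g1 z k = \<alpha> * g2 z k + \<beta> * g3 z k"
  shows "bracket_one g1 z k = \<alpha> * bracket_one g2 z k + \<beta> * bracket_one g3 z k"
  by (induction k) (simp_all add: assms algebra_simps add_divide_distrib)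

lemma bracket_aux_append_linear:
  assumes "\<And>z k. bracket_aux w1 z k = \<alpha> * bracket_aux w2 z k + \<beta> * bracket_aux w3 z k"
  shows "bracket_aux (v @ w1) z k = \<alpha> * bracket_aux (v @ w2) z k + \<beta> * bracket_aux (v @ w3) z k"
  by (induction v arbitrary: z k) (simp_all add: assms add_divide_distrib bracket_one_linear)

lemma bracket_lr_zero_one: "bracket_lr (v @ 0 # 1 # w) = bracket_lr (v @ 0 # w) / a"
  using bracket_aux_append_linear[of "0 # 1 # w" "1 / a" "0 # w" 0 w v False 0]
  by (simp add: bracket_lr_def)

lemma bracket_lr_bar_one:
  "bracket_lr (v @ -1 # 1 # w) = (bracket_lr (v @ -1 # w) + bracket_lr (v @ 1 # w)) / b"
  using bracket_aux_append_linear[of "-1 # 1 # w" "1 / b" "-1 # w" "1 / b" "1 # w" v False 0]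
  by (simp add: bracket_lr_def add_divide_distrib)

lemma bracket_lr_bar_zero: "bracket_lr (v @ -1 # 0 # w) = bracket_lr (v @ 0 # w) / c"
  using bracket_aux_append_linear[of "-1 # 0 # w" "1 / c" "0 # w" 0 w v False 0]
  by (simp add: bracket_lr_def)

lemma bracket_lr_snoc_bar: "bracket_lr (v @ [-1]) = bracket_lr v / d"
  using bracket_aux_append_linear[of "[-1]" "1 / d" "[]" 0 "[]" v False 0]
  by (simp add: bracket_lr_def)

lemma bracket_lr_Cons_one: "bracket_lr (1 # w) = bracket_lr w / e"
  by (simp add: bracket_lr_def)

lemma bracket_lr_zeros: "\<forall>x\<in>set u. x = 0 \<Longrightarrow> bracket_lr u = 1"
proof -
  have "bracket_aux (replicate m 0) z 0 = 1" for m z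
    by (induction m arbitrary: z) auto
  moreover assume "\<forall>x\<in>set u. x = 0"
  then have "u = replicate (length u) 0" by (simp add: list_eq_iff_nth_eq)
  ultimately show ?thesis by (metis bracket_lr_def)
qed

lemma bracket_lr_pos:
  assumes "0 < a" "0 < b" "0 < c" "0 < d" "0 < e"
  shows "0 < bracket_lr u"
proof -
  have one: "0 < bracket_one g z k" if "\<And>z k. 0 < g z k" for g z k
    using that assms by (induction k) (auto intro!: divide_pos_pos add_pos_pos)
  have "0 < bracket_aux w z k" for w z k
    using assms by (induction w arbitrary: z k) (auto intro!: one)
  then show ?thesis by (simp add: bracket_lr_def)
qed

lemma bracket_lr_red_pos:
  assumes "red_pos u i"
  shows "bracket_lr u =
    (if u ! i = 0 then bracket_lr (del_at (Suc i) u) / a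
     else if u ! Suc i = 1 then
       (bracket_lr (del_at (Suc i) u) + bracket_lr (del_at i u)) / b
     else bracket_lr (del_at i u) / c)"
proof -
  have pair: "(u ! i, u ! Suc i) \<in> {(0, 1), (-1, 1), (-1, 0)}" and "Suc i < length u"
    using assms by (auto simp: red_pos_def)
  then obtain L R where u: "u = L @ u ! i # u ! Suc i # R" and i: "i = length L"
    by (metis obtain_adjacent)
  have "del_at i u = L @ u ! Suc i # R" "del_at (Suc i) u = L @ u ! i # R"
    by (subst u, simp only: i del_at_append del_at_append_Suc)+
  then show ?thesis
    using pair bracket_lr_zero_one[of L R] bracket_lr_bar_one[of L R]
      bracket_lr_bar_zero[of L R] by (subst u) auto
qed

end

lemma no_red_pos_imp_ones_zeros:
  assumes "set u \<subseteq> {-1, 0, 1}" "\<nexists>i. red_pos u i" "u \<noteq> [] \<longrightarrow> last u \<noteq> -1"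
  shows "\<exists>k m. u = replicate k 1 @ replicate m 0"
  using assms
proof (induction u)
  case (Cons x w)
  have "\<nexists>i. red_pos w i" using Cons.prems(2) by (auto simp: red_pos_def)
  moreover have "w \<noteq> [] \<longrightarrow> last w \<noteq> -1" using Cons.prems(3) by auto
  ultimately obtain k m where w: "w = replicate k 1 @ replicate m 0"
    using Cons.IH Cons.prems(1) by auto
  show ?case
  proof (cases "x = 1")
    case True
    then show ?thesis using w by (metis replicate_Suc append_Cons)
  next
    case x: False
    show ?thesis
    proof (cases "w = []")
      case True
      then show ?thesis using Cons.prems(1,3) x by (intro exI[of _ 0] exI[of _ 1]) auto
    next
      case False
      then obtain y w' where yw: "w = y # w'" by (cases w) auto
      have "\<not> red_pos (x # y # w') 0" using Cons.prems(2) yw by blast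
      moreover have "y = 1 \<or> y = 0" "y = 1 \<or> k = 0" using w yw by (cases k; cases m; simp)+
      ultimately have "x = 0 \<and> k = 0" using Cons.prems(1) x by (auto simp: red_pos_def)
      then show ?thesis using w by (intro exI[of _ 0] exI[of _ "Suc m"]) simp
    qed
  qed
qed simp

declare bracket.simps [simp del]

lemma bracket_eq_bracket_lr:
  "set u \<subseteq> {-1, 0, 1} \<Longrightarrow> bracket a b c d e u = bracket_lr a b c d e u"
proof (induction "length u" arbitrary: u rule: less_induct)
  case less
  have IH: "bracket a b c d e w = bracket_lr a b c d e w"
    if "length w < length u" "set w \<subseteq> set u" for w
    using less that by blast
  consider "\<forall>x\<in>set u. x = 0" | "\<not> (\<forall>x\<in>set u. x = 0)" "hd u = 1"
    | "\<not> (\<forall>x\<in>set u. x = 0)" "hd u \<noteq> 1" "last u = -1"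
    | "\<not> (\<forall>x\<in>set u. x = 0)" "hd u \<noteq> 1" "last u \<noteq> -1" "\<exists>i. red_pos u i"
    | "\<not> (\<forall>x\<in>set u. x = 0)" "hd u \<noteq> 1" "last u \<noteq> -1" "\<nexists>i. red_pos u i"
    by blast
  then show ?case
  proof cases
    case 1
    then show ?thesis by (simp add: bracket.simps bracket_lr_zeros)
  next
    case 2
    then have u: "u = 1 # tl u" by (cases u) auto
    have "bracket_lr a b c d e u = bracket_lr a b c d e (tl u) / e"
      by (subst u) (rule bracket_lr_Cons_one)
    moreover have "bracket a b c d e (tl u) = bracket_lr a b c d e (tl u)"
      using u by (intro IH) (metis length_Cons lessI, metis set_subset_Cons)
    ultimately show ?thesis using 2 by (subst bracket.simps) auto
  next
    case 3
    then have u: "u = butlast u @ [-1]" by (metis append_butlast_last_id last.simps list.set(1) all_not_in_conv)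
    have "bracket_lr a b c d e u = bracket_lr a b c d e (butlast u) / d"
      by (subst u) (rule bracket_lr_snoc_bar)
    moreover have "bracket a b c d e (butlast u) = bracket_lr a b c d e (butlast u)"
      using u by (intro IH) (metis length_append_singleton lessI, metis set_append Un_upper1)
    ultimately show ?thesis using 3 by (subst bracket.simps) auto
  next
    case 4
    define i where "i = first_red u"
    have "red_pos u i" unfolding i_def first_red_def using 4(4) by (rule LeastI_ex)
    then have "Suc i < length u" by (simp add: red_pos_def)
    then have "bracket a b c d e (del_at j u) = bracket_lr a b c d e (del_at j u)" if "j \<le> Suc i" for j
      using that by (intro IH length_del_at set_del_at_subset) simp
    then show ?thesis using 4 bracket_lr_red_pos[OF \<open>red_pos u i\<close>, of a b c d e]
      by (subst bracket.simps) (auto simp: i_def[symmetric])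
  next
    case 5
    then obtain k m where "u = replicate k 1 @ replicate m 0"
      using no_red_pos_imp_ones_zeros less.prems by blast
    then show ?thesis using 5 by (cases k) auto
  qed
qed

section \<open>Moves of the chain\<close>

definition swap_at :: "nat \<Rightarrow> 'a list \<Rightarrow> 'a list" where
  "swap_at i u = u[i := u ! Suc i, Suc i := u ! i]"

definition flip_at :: "nat \<Rightarrow> int list \<Rightarrow> int list" where
  "flip_at j u = u[j := - u ! j]"

definition bond_rate :: "real \<Rightarrow> real \<Rightarrow> real \<Rightarrow> int \<Rightarrow> int \<Rightarrow> real" where
  "bond_rate a b c x y =
    (if x = 0 \<and> y = 1 then a else if x = -1 \<and> y = 1 then b else if x = -1 \<and> y = 0 then c else 0)"

lemma length_swap_at [simp]: "length (swap_at i u) = length u"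
  by (simp add: swap_at_def)

lemma length_flip_at [simp]: "length (flip_at j u) = length u"
  by (simp add: flip_at_def)

lemma swap_at_append: "swap_at (length L) (L @ x # y # R) = L @ y # x # R"
  by (simp add: swap_at_def list_update_append nth_append)

lemma swap_at_swap_at: "Suc i < length u \<Longrightarrow> swap_at i (swap_at i u) = u"
  by (simp add: swap_at_def list_update_swap list_update_overwrite)

lemma flip_at_flip_at [simp]: "flip_at j (flip_at j u) = u"
  by (cases "j < length u") (simp_all add: flip_at_def list_update_beyond)

lemma bond_rate_same [simp]: "bond_rate a b c x x = 0"
  by (simp add: bond_rate_def)

lemma finite_states: "finite (states n t)"
proof -
  have "states n t \<subseteq> {xs. set xs \<subseteq> {-1, 0, 1} \<and> length xs = n}" by (auto simp: states_def)
  moreover have "finite {xs. set xs \<subseteq> {-1, 0, 1 :: int} \<and> length xs = n}"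
    by (rule finite_lists_length_eq) simp
  ultimately show ?thesis by (rule finite_subset)
qed

lemma swap_at_in_states:
  assumes "u \<in> states n t" "Suc i < n"
  shows "swap_at i u \<in> states n t"
proof -
  have m: "mset (swap_at i u) = mset u"
    using assms mset_swap[of "Suc i" u i] by (simp add: states_def swap_at_def)
  then have "length (filter P (swap_at i u)) = length (filter P u)" for P
    by (metis mset_filter size_mset)
  moreover have "set (swap_at i u) = set u" using m by (metis set_mset_mset)
  ultimately show ?thesis using assms(1) by (simp add: states_def)
qed

lemma flip_at_in_states:
  assumes u: "u \<in> states n t" and "j < n" "u ! j \<noteq> 0"
  shows "flip_at j u \<in> states n t"
proof -
  have "u ! j \<in> {-1, 1}" using u assms nth_mem by (fastforce simp: states_def)
  then have "set (flip_at j u) \<subseteq> {-1, 0, 1}"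
    using u set_update_subset_insert[of u j "- u ! j"] by (auto simp: states_def flip_at_def)
  moreover have "{i. i < length u \<and> flip_at j u ! i \<noteq> 0} = {i. i < length u \<and> u ! i \<noteq> 0}"
    using u assms(2) by (auto simp: flip_at_def nth_list_update states_def)
  ultimately show ?thesis using u by (auto simp: states_def length_filter_conv_card)
qed

lemma swap_at_in_states_diff:
  assumes "u \<in> states n t" "Suc i < n" "u ! i \<noteq> u ! Suc i"
  shows "swap_at i u \<in> states n t - {u}"
proof -
  have "swap_at i u ! i \<noteq> u ! i" using assms by (simp add: swap_at_def states_def nth_list_update)
  then show ?thesis using swap_at_in_states assms by fastforce
qed

lemma flip_at_in_states_diff:
  assumes "u \<in> states n t" "j < n" "u ! j \<noteq> 0"
  shows "flip_at j u \<in> states n t - {u}"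
proof -
  have "flip_at j u ! j \<noteq> u ! j" using assms by (simp add: flip_at_def states_def)
  then show ?thesis using flip_at_in_states assms by fastforce
qed

lemma rate_eq:
  assumes "u \<noteq> []"
  shows "rate a b c d e u v =
    (\<Sum>i<length u - 1. if v = swap_at i u then bond_rate a b c (u ! i) (u ! Suc i) else 0)
    + (if v = flip_at (length u - 1) u then (if u ! (length u - 1) = -1 then d else 0) else 0)
    + (if v = flip_at 0 u then (if u ! 0 = 1 then e else 0) else 0)"
proof -
  have bond: "(if u ! i = 0 \<and> u ! Suc i = 1 \<and> v = u[i := 1, Suc i := 0] then a else 0)
      + (if u ! i = -1 \<and> u ! Suc i = 1 \<and> v = u[i := 1, Suc i := -1] then b else 0)
      + (if u ! i = -1 \<and> u ! Suc i = 0 \<and> v = u[i := 0, Suc i := -1] then c else 0)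
    = (if v = swap_at i u then bond_rate a b c (u ! i) (u ! Suc i) else 0)" for i
    unfolding bond_rate_def swap_at_def
    by (cases "u ! i = 0"; cases "u ! i = -1"; cases "u ! Suc i = 0"; cases "u ! Suc i = 1") simp_all
  have "flip_at (length u - 1) u = butlast u @ [- last u]"
    using assms by (cases u rule: rev_cases) (simp_all add: flip_at_def list_update_append)
  then have right: "(if u \<noteq> [] \<and> last u = -1 \<and> v = butlast u @ [1] then d else 0)
    = (if v = flip_at (length u - 1) u then (if u ! (length u - 1) = -1 then d else 0) else 0)"
    using assms by (auto simp: last_conv_nth)
  have "flip_at 0 u = - hd u # tl u"
    using assms by (cases u) (simp_all add: flip_at_def)
  then have left: "(if u \<noteq> [] \<and> hd u = 1 \<and> v = -1 # tl u then e else 0)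
    = (if v = flip_at 0 u then (if u ! 0 = 1 then e else 0) else 0)"
    using assms by (auto simp: hd_conv_nth)
  show ?thesis unfolding rate_def bond right left ..
qed

section \<open>The balance equations\<close>

lemma sum_delta_target:
  fixes x :: "'b::comm_monoid_add"
  assumes "finite A" "x \<noteq> 0 \<Longrightarrow> w \<in> A"
  shows "(\<Sum>v\<in>A. if v = w then x else 0) = x"
  using assms by (cases "x = 0") simp_all

lemma sum_delta_source:
  fixes f \<omega> :: "'a \<Rightarrow> real"
  assumes "finite A" "\<And>v. v \<in> A \<Longrightarrow> \<tau> (\<tau> v) = v" "\<tau> (\<tau> u) = u" "\<omega> (\<tau> u) \<noteq> 0 \<Longrightarrow> \<tau> u \<in> A"
  shows "(\<Sum>v\<in>A. f v * (if u = \<tau> v then \<omega> v else 0)) = f (\<tau> u) * \<omega> (\<tau> u)"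
proof -
  have "(\<Sum>v\<in>A. f v * (if u = \<tau> v then \<omega> v else 0)) = (\<Sum>v\<in>A. if v = \<tau> u then f v * \<omega> v else 0)"
    using assms(2,3) by (intro sum.cong) auto
  also have "\<dots> = f (\<tau> u) * \<omega> (\<tau> u)" using assms(1,4) by (cases "\<omega> (\<tau> u) = 0") simp_all
  finally show ?thesis .
qed

lemma outflow_eq:
  assumes u: "u \<in> states n t" and n: "1 \<le> n"
  shows "(\<Sum>v\<in>states n t - {u}. rate a b c d e u v)
    = (\<Sum>i<n - 1. bond_rate a b c (u ! i) (u ! Suc i))
      + (if u ! (n - 1) = -1 then d else 0) + (if u ! 0 = 1 then e else 0)"
proof -
  define A where "A = states n t - {u}"
  have fin: "finite A" unfolding A_def by (simp add: finite_states)
  have len: "length u = n" using u by (simp add: states_def)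
  have bond: "(\<Sum>v\<in>A. if v = swap_at i u then bond_rate a b c (u ! i) (u ! Suc i) else 0)
      = bond_rate a b c (u ! i) (u ! Suc i)" if "i < n - 1" for i
    using that swap_at_in_states_diff[OF u, of i] unfolding A_def
    by (intro sum_delta_target[OF fin[unfolded A_def]]) (cases "u ! i = u ! Suc i"; simp)
  have right: "(\<Sum>v\<in>A. if v = flip_at (n - 1) u then (if u ! (n - 1) = -1 then d else 0) else 0)
      = (if u ! (n - 1) = -1 then d else 0)"
    using n flip_at_in_states_diff[OF u, of "n - 1"] by (intro sum_delta_target[OF fin]) (auto simp: A_def split: if_splits)
  have left: "(\<Sum>v\<in>A. if v = flip_at 0 u then (if u ! 0 = 1 then e else 0) else 0)
      = (if u ! 0 = 1 then e else 0)"
    using n flip_at_in_states_diff[OF u, of 0] by (intro sum_delta_target[OF fin]) (auto simp: A_def split: if_splits)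
  have "(\<Sum>v\<in>A. rate a b c d e u v)
    = (\<Sum>i<n - 1. \<Sum>v\<in>A. if v = swap_at i u then bond_rate a b c (u ! i) (u ! Suc i) else 0)
      + (\<Sum>v\<in>A. if v = flip_at (n - 1) u then (if u ! (n - 1) = -1 then d else 0) else 0)
      + (\<Sum>v\<in>A. if v = flip_at 0 u then (if u ! 0 = 1 then e else 0) else 0)"
    using len n by (simp only: rate_eq[of u] length_greater_0_conv[symmetric] sum.distrib sum.swap[of _ A])
  then show ?thesis using bond right left by (simp add: A_def)
qed

lemma inflow_flip_at:
  fixes f :: "int list \<Rightarrow> real"
  assumes u: "u \<in> states n t" and j: "j < n" and x: "x \<in> {-1, 1}"
  shows "(\<Sum>v\<in>states n t - {u}. f v * (if u = flip_at j v then (if v ! j = x then r else 0) else 0))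
    = f (flip_at j u) * (if u ! j = - x then r else 0)"
proof -
  have flip_j: "flip_at j u ! j = - u ! j"
    using u j by (simp add: flip_at_def states_def)
  have "flip_at j u \<in> states n t - {u}" if "(if flip_at j u ! j = x then r else 0) \<noteq> 0"
  proof -
    have "u ! j \<noteq> 0" using that flip_j x by (cases "flip_at j u ! j = x") auto
    then show ?thesis by (rule flip_at_in_states_diff[OF u j])
  qed
  then have "(\<Sum>v\<in>states n t - {u}. f v * (if u = flip_at j v then (if v ! j = x then r else 0) else 0))
    = f (flip_at j u) * (if flip_at j u ! j = x then r else 0)"
    by (intro sum_delta_source) (simp_all add: finite_states)
  then show ?thesis using flip_j by auto
qed

lemma sum_mult_rate_into:
  fixes f :: "int list \<Rightarrow> real"
  assumes len: "\<And>v. v \<in> A \<Longrightarrow> length v = n" and n: "1 \<le> n"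
  shows "(\<Sum>v\<in>A. f v * rate a b c d e v u)
    = (\<Sum>i<n - 1. \<Sum>v\<in>A. f v * (if u = swap_at i v then bond_rate a b c (v ! i) (v ! Suc i) else 0))
      + (\<Sum>v\<in>A. f v * (if u = flip_at (n - 1) v then (if v ! (n - 1) = -1 then d else 0) else 0))
      + (\<Sum>v\<in>A. f v * (if u = flip_at 0 v then (if v ! 0 = 1 then e else 0) else 0))"
proof -
  have "f v * rate a b c d e v u
    = (\<Sum>i<n - 1. f v * (if u = swap_at i v then bond_rate a b c (v ! i) (v ! Suc i) else 0))
      + f v * (if u = flip_at (n - 1) v then (if v ! (n - 1) = -1 then d else 0) else 0)
      + f v * (if u = flip_at 0 v then (if v ! 0 = 1 then e else 0) else 0)" if "v \<in> A" for v
    using len[OF that] n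
    by (simp only: rate_eq[of v] length_greater_0_conv[symmetric] distrib_left sum_distrib_left)
  then have "(\<Sum>v\<in>A. f v * rate a b c d e v u)
    = (\<Sum>v\<in>A. (\<Sum>i<n - 1. f v * (if u = swap_at i v then bond_rate a b c (v ! i) (v ! Suc i) else 0))
      + f v * (if u = flip_at (n - 1) v then (if v ! (n - 1) = -1 then d else 0) else 0)
      + f v * (if u = flip_at 0 v then (if v ! 0 = 1 then e else 0) else 0))"
    by (rule sum.cong[OF refl])
  then show ?thesis by (simp only: sum.distrib sum.swap[of _ A])
qed

lemma inflow_swap_at:
  fixes f :: "int list \<Rightarrow> real"
  assumes u: "u \<in> states n t" and si: "Suc i < n"
  shows "(\<Sum>v\<in>states n t - {u}. f v * (if u = swap_at i v then bond_rate a b c (v ! i) (v ! Suc i) else 0))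
    = f (swap_at i u) * bond_rate a b c (u ! Suc i) (u ! i)"
proof -
  have len: "\<And>v. v \<in> states n t \<Longrightarrow> length v = n" by (simp add: states_def)
  have rate_u: "bond_rate a b c (swap_at i u ! i) (swap_at i u ! Suc i) = bond_rate a b c (u ! Suc i) (u ! i)"
    using si len[OF u] by (simp add: swap_at_def nth_list_update)
  have "swap_at i u \<in> states n t - {u}" if "bond_rate a b c (swap_at i u ! i) (swap_at i u ! Suc i) \<noteq> 0"
    using that rate_u swap_at_in_states_diff[OF u si] by fastforce
  then show ?thesis
    using sum_delta_source[OF finite_Diff[OF finite_states], where \<tau> = "swap_at i" and u = u
        and \<omega> = "\<lambda>v. bond_rate a b c (v ! i) (v ! Suc i)" and f = f]
      si u len rate_u by (simp add: swap_at_swap_at)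
qed

lemma inflow_eq:
  fixes f :: "int list \<Rightarrow> real"
  assumes u: "u \<in> states n t" and n: "1 \<le> n"
  shows "(\<Sum>v\<in>states n t - {u}. f v * rate a b c d e v u)
    = (\<Sum>i<n - 1. f (swap_at i u) * bond_rate a b c (u ! Suc i) (u ! i))
      + f (flip_at (n - 1) u) * (if u ! (n - 1) = 1 then d else 0)
      + f (flip_at 0 u) * (if u ! 0 = -1 then e else 0)"
proof -
  have "\<And>v. v \<in> states n t - {u} \<Longrightarrow> length v = n" by (simp add: states_def)
  then show ?thesis
    using sum_mult_rate_into[of "states n t - {u}" n f a b c d e u] n inflow_swap_at[OF u]
      inflow_flip_at[OF u, of "n - 1" "-1"] inflow_flip_at[OF u, of 0 1]
    by simp
qed

context fixes a b c d e :: real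
  assumes nonzero: "a \<noteq> 0" "b \<noteq> 0" "c \<noteq> 0" "d \<noteq> 0" "e \<noteq> 0"
begin

lemma bracket_lr_bond_flux:
  assumes i: "Suc i < length u" and letters: "u ! i \<in> {-1, 0, 1}" "u ! Suc i \<in> {-1, 0, 1}"
  shows "bracket_lr a b c d e (swap_at i u) * bond_rate a b c (u ! Suc i) (u ! i)
      - bracket_lr a b c d e u * bond_rate a b c (u ! i) (u ! Suc i)
    = of_int (u ! i) * bracket_lr a b c d e (del_at i u)
      - of_int (u ! Suc i) * bracket_lr a b c d e (del_at (Suc i) u)"
proof -
  obtain L R where LR: "u = L @ u ! i # u ! Suc i # R" and L: "length L = i"
    using i by (rule obtain_adjacent)
  define x y where "x = u ! i" and "y = u ! Suc i"
  have "bracket_lr a b c d e (L @ y # x # R) * bond_rate a b c y x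
      - bracket_lr a b c d e (L @ x # y # R) * bond_rate a b c x y
    = of_int x * bracket_lr a b c d e (L @ y # R) - of_int y * bracket_lr a b c d e (L @ x # R)"
    using letters nonzero unfolding x_def[symmetric] y_def[symmetric]
    by (auto simp: bond_rate_def bracket_lr_zero_one bracket_lr_bar_one bracket_lr_bar_zero)
  moreover have "swap_at i u = L @ y # x # R" "del_at i u = L @ y # R" "del_at (Suc i) u = L @ x # R"
    "bracket_lr a b c d e u = bracket_lr a b c d e (L @ x # y # R)"
    unfolding x_def y_def
    by (subst LR, simp only: L[symmetric] swap_at_append del_at_append del_at_append_Suc)+
  ultimately show ?thesis unfolding x_def[symmetric] y_def[symmetric] by simp
qed

lemma bracket_lr_right_flux:
  assumes "u \<noteq> []" and letter: "u ! (length u - 1) \<in> {-1, 0, 1}"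
  shows "bracket_lr a b c d e (flip_at (length u - 1) u) * (if u ! (length u - 1) = 1 then d else 0)
      - bracket_lr a b c d e u * (if u ! (length u - 1) = -1 then d else 0)
    = of_int (u ! (length u - 1)) * bracket_lr a b c d e (del_at (length u - 1) u)"
  using assms(1)
proof (cases u rule: rev_cases)
  case (snoc L x)
  then have "x \<in> {-1, 0, 1}" using letter by simp
  then show ?thesis using snoc nonzero
    by (auto simp: flip_at_def list_update_append del_at_def bracket_lr_snoc_bar)
qed simp

lemma bracket_lr_left_flux:
  assumes "u \<noteq> []" and letter: "u ! 0 \<in> {-1, 0, 1}"
  shows "bracket_lr a b c d e (flip_at 0 u) * (if u ! 0 = -1 then e else 0)
      - bracket_lr a b c d e u * (if u ! 0 = 1 then e else 0)
    = - (of_int (u ! 0) * bracket_lr a b c d e (del_at 0 u))"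
  using assms(1)
proof (cases u)
  case (Cons x R)
  then have "x \<in> {-1, 0, 1}" using letter by simp
  then show ?thesis using Cons nonzero by (auto simp: flip_at_def del_at_def bracket_lr_Cons_one)
qed simp

lemma bracket_lr_balanced:
  assumes n: "1 \<le> n"
  shows "balanced (states n t) (rate a b c d e) (bracket_lr a b c d e)"
  unfolding balanced_def
proof
  fix u assume u: "u \<in> states n t"
  define F where "F = bracket_lr a b c d e"
  define g where "g j = of_int (u ! j) * F (del_at j u)" for j
  have len: "length u = n" and letter: "\<And>j. j < n \<Longrightarrow> u ! j \<in> {-1, 0, 1}"
    using u nth_mem by (auto simp: states_def)
  have ne: "u \<noteq> []" using len n by auto
  have "(\<Sum>v\<in>states n t - {u}. F v * rate a b c d e v u)
      - F u * (\<Sum>v\<in>states n t - {u}. rate a b c d e u v)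
    = (\<Sum>i<n - 1. F (swap_at i u) * bond_rate a b c (u ! Suc i) (u ! i)
          - F u * bond_rate a b c (u ! i) (u ! Suc i))
      + (F (flip_at (n - 1) u) * (if u ! (n - 1) = 1 then d else 0)
          - F u * (if u ! (n - 1) = -1 then d else 0))
      + (F (flip_at 0 u) * (if u ! 0 = -1 then e else 0) - F u * (if u ! 0 = 1 then e else 0))"
    unfolding inflow_eq[OF u n] outflow_eq[OF u n]
    by (simp add: algebra_simps sum_subtractf sum_distrib_left)
  also have "\<dots> = (\<Sum>i<n - 1. g i - g (Suc i)) + g (n - 1) - g 0"
    using bracket_lr_bond_flux[of _ u] bracket_lr_right_flux[OF ne] bracket_lr_left_flux[OF ne]
      letter len n by (simp add: F_def g_def)
  also have "\<dots> = 0" by (simp add: sum_lessThan_telescope')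
  finally show "(\<Sum>v\<in>states n t - {u}. F v * rate a b c d e v u)
      = F u * (\<Sum>v\<in>states n t - {u}. rate a b c d e u v)" by simp
qed

end

section \<open>Reaching the ground state\<close>

lemma sum_less_if_differ_on:
  fixes f g :: "'a \<Rightarrow> 'b::ordered_cancel_comm_monoid_add"
  assumes "finite A" "K \<subseteq> A" "\<And>j. j \<in> A - K \<Longrightarrow> f j = g j" "sum f K < sum g K"
  shows "sum f A < sum g A"
proof -
  have "sum f (A - K) = sum g (A - K)" using assms(3) by (rule sum.cong[OF refl])
  then show ?thesis using assms(1,2,4) by (simp add: sum.subset_diff[of K A] add_strict_left_mono)
qed

text \<open>Every move of the chain lowers the potential: a 1 moving left lowers its weight j, a -1
  moving right lowers its weight 2n - j, and the flip at the right end trades n + 1 for n - 1.\<close>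

definition letter_weight :: "nat \<Rightarrow> int \<Rightarrow> nat \<Rightarrow> nat" where
  "letter_weight n x j = (if x = 1 then j else if x = -1 then 2 * n - j else 0)"

definition potential :: "int list \<Rightarrow> nat" where
  "potential u = (\<Sum>j<length u. letter_weight (length u) (u ! j) j)"

lemma potential_swap_at_less:
  assumes "red_pos u i"
  shows "potential (swap_at i u) < potential u"
  unfolding potential_def length_swap_at
proof (rule sum_less_if_differ_on[where K = "{i, Suc i}"])
  let ?w = "letter_weight (length u)"
  have si: "Suc i < length u" and pair: "(u ! i, u ! Suc i) \<in> {(0, 1), (-1, 1), (-1, 0)}"
    using assms by (auto simp: red_pos_def)
  show "{i, Suc i} \<subseteq> {..<length u}" using si by auto
  show "?w (swap_at i u ! j) j = ?w (u ! j) j" if "j \<in> {..<length u} - {i, Suc i}" for j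
    using that by (simp add: swap_at_def)
  have "?w (u ! Suc i) i + ?w (u ! i) (Suc i) < ?w (u ! i) i + ?w (u ! Suc i) (Suc i)"
    using pair si by (elim insertE emptyE) (simp_all add: letter_weight_def)
  then show "(\<Sum>j\<in>{i, Suc i}. ?w (swap_at i u ! j) j) < (\<Sum>j\<in>{i, Suc i}. ?w (u ! j) j)"
    using si by (simp add: swap_at_def)
qed simp

lemma potential_flip_at_less:
  assumes "u \<noteq> []" "u ! (length u - 1) = -1"
  shows "potential (flip_at (length u - 1) u) < potential u"
  unfolding potential_def length_flip_at
proof (rule sum_less_if_differ_on[where K = "{length u - 1}"])
  show "{length u - 1} \<subseteq> {..<length u}" using assms by auto
  show "letter_weight (length u) (flip_at (length u - 1) u ! j) j = letter_weight (length u) (u ! j) j"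
    if "j \<in> {..<length u} - {length u - 1}" for j
    using that by (simp add: flip_at_def)
  show "(\<Sum>j\<in>{length u - 1}. letter_weight (length u) (flip_at (length u - 1) u ! j) j)
      < (\<Sum>j\<in>{length u - 1}. letter_weight (length u) (u ! j) j)"
  proof -
    have "flip_at (length u - 1) u ! (length u - 1) = 1" and len: "0 < length u"
      using assms by (simp_all add: flip_at_def)
    then show ?thesis using assms(2) by (simp add: letter_weight_def) (use len in linarith)
  qed
qed simp

context fixes a b c d e :: real
  assumes pos: "0 < a" "0 < b" "0 < c" "0 < d" "0 < e"
begin

lemma rate_nonneg: "0 \<le> rate a b c d e u v"
  unfolding rate_def using pos by (intro add_nonneg_nonneg sum_nonneg) auto

lemma rate_swap_at_pos:
  assumes "red_pos u i"
  shows "0 < rate a b c d e u (swap_at i u)"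
proof -
  define f where "f j = (if swap_at i u = swap_at j u then bond_rate a b c (u ! j) (u ! Suc j) else 0)" for j
  have si: "Suc i < length u" and "0 < f i"
    using assms pos by (auto simp: red_pos_def bond_rate_def f_def)
  moreover have "f i \<le> (\<Sum>j<length u - 1. f j)"
    using si pos by (intro member_le_sum) (auto simp: f_def bond_rate_def)
  moreover have "u \<noteq> []" using si by auto
  ultimately show ?thesis
    unfolding rate_eq[OF \<open>u \<noteq> []\<close>] f_def[symmetric]
    by (intro add_pos_nonneg) (use pos in auto)
qed

lemma rate_flip_at_pos:
  assumes "u \<noteq> []" "u ! (length u - 1) = -1"
  shows "0 < rate a b c d e u (flip_at (length u - 1) u)"
  unfolding rate_eq[OF assms(1)] using assms pos
  by (intro add_pos_nonneg add_nonneg_pos sum_nonneg) (auto simp: bond_rate_def)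

lemma reaches_ground_state:
  assumes "u \<in> states n t"
  shows "(u, replicate t 1 @ replicate (n - t) 0)
    \<in> {(u, v). u \<in> states n t \<and> v \<in> states n t \<and> 0 < rate a b c d e u v}\<^sup>*"
  using assms
proof (induction "potential u" arbitrary: u rule: less_induct)
  case less
  have len: "length u = n" and letters: "set u \<subseteq> {-1, 0, 1}"
    and count: "length (filter (\<lambda>x. x \<noteq> 0) u) = t"
    using less.prems by (auto simp: states_def)
  have step: ?case
    if "v \<in> states n t" "0 < rate a b c d e u v" "potential v < potential u" for v
    using less.hyps[OF that(3,1)] less.prems that(1,2) by (blast intro: converse_rtrancl_into_rtrancl)
  consider i where "red_pos u i" | "\<nexists>i. red_pos u i" "u \<noteq> []" "last u = -1"
    | "\<nexists>i. red_pos u i" "u \<noteq> [] \<longrightarrow> last u \<noteq> -1"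
    by blast
  then show ?case
  proof cases
    case (1 i)
    then have "Suc i < n" using len by (simp add: red_pos_def)
    then show ?thesis using 1 less.prems
      by (intro step[of "swap_at i u"] swap_at_in_states rate_swap_at_pos potential_swap_at_less)
  next
    case 2
    then have "u ! (length u - 1) = -1" by (simp add: last_conv_nth)
    then show ?thesis using 2 less.prems len
      by (intro step[of "flip_at (length u - 1) u"] flip_at_in_states rate_flip_at_pos potential_flip_at_less) auto
  next
    case 3
    then obtain k m where "u = replicate k 1 @ replicate m 0"
      using no_red_pos_imp_ones_zeros letters by blast
    moreover have "k = t" "k + m = n" using calculation count len by simp_all
    ultimately show ?thesis by auto
  qed
qed

end

theorem theorem2:
  fixes n t :: nat and a b c d e :: real and p :: "int list \<Rightarrow> real"
  assumes "n \<ge> 2" and "1 \<le> t" and "t \<le> n - 1"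
    and "a > 0" and "b > 0" and "c > 0" and "d > 0" and "e > 0"
  shows "stationary (states n t) (rate a b c d e) p \<longleftrightarrow>
    (\<forall>u\<in>states n t. p u = bracket a b c d e u / (\<Sum>w\<in>states n t. bracket a b c d e w))"
proof -
  note pos = assms(4-8)
  have ground: "replicate t 1 @ replicate (n - t) 0 \<in> states n t"
    using assms(3) by (auto simp: states_def)
  have "stationary (states n t) (rate a b c d e) p \<longleftrightarrow>
    (\<forall>u\<in>states n t. p u = bracket_lr a b c d e u / (\<Sum>w\<in>states n t. bracket_lr a b c d e w))"
    using assms(1) pos
    by (intro stationary_iff_normalized[OF finite_states _ _ _ ground]
        rate_nonneg bracket_lr_pos bracket_lr_balanced reaches_ground_state) auto
  moreover have "bracket a b c d e u = bracket_lr a b c d e u" if "u \<in> states n t" for u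
    using that by (intro bracket_eq_bracket_lr) (simp add: states_def)
  ultimately show ?thesis by (simp cong: sum.cong)
qed

end
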